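(* Let $\mu\in GF(q)\setminus\{0\}$ with $b:=\mu^2\neq1$. Then the $2(q+1)$ common tangent circles of $\mathcal B_1$ and $\mathcal B_b$ are exactly the circles in $$\{\mathcal B^1_{(sP,c)}:P\in\mathcal B_1\}\ \cup\ \{\mathcal B^1_{(s'P,c')}:P\in\mathcal B_1\},$$ where $s=\frac{1+\mu}2$, $c=\left(\frac{1-\mu}2\right)^2$, $s'=\frac{1-\mu}2$, $c'=\left(\frac{1+\mu}2\right)^2$. Moreover, for every $P\in\mathcal B_1$ we have $P,\mu P\in\mathcal B^1_{(sP,c)}$ and $P,-\mu P\in\mathcal B^1_{(s'P,c')}$.
   Context: Let $p$ be an odd prime, $m\ge1$, and $q=p^m$. $GF(q^2)$ denotes the quadratic extension of $GF(q)$, and for $z\in GF(q^2)$ we write $\bar z:=z^{q}$. The Miquelian Möbius plane $\mathbb M(q)$ has point set $GF(q^2)\cup\{\infty\}$ and circles of two types: for $s\in GF(q^2)$ and $c\in GF(q)\setminus\{0\}$, the circle of the first type $\mathcal B^1_{(s,c)}=\{z\in GF(q^2):(z-s)(\bar z-\bar s)=c\}$; for $s\in GF(q^2)\setminus\{0\}$ and $c\in GF(q)$, the circle of the second type $\mathcal B^2_{(s,c)}=\{z\in GF(q^2):\bar s z+s\bar z=c\}\cup\{\infty\}$. Two circles are called tangential if they have exactly one point in common. For $a\in GF(q)\setminus\{0\}$ put $\mathcal B_a:=\mathcal B^1_{(0,a)}$; so $\mathcal B_1=\{z: z\bar z=1\}$. *)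

theory Defs
  imports "HOL-Computational_Algebra.Primes"
begin

text \<open>The field GF(q^2) is modelled as a finite field type 'a of cardinality q^2;
 the points of the Miquelian Moebius plane are 'a option, with None playing the role of infinity.\<close>

definition conjq :: "nat \<Rightarrow> 'a::field \<Rightarrow> 'a" where
  "conjq q z = z ^ q"

definition GFq :: "nat \<Rightarrow> 'a::field set" where
  "GFq q = {z. z ^ q = z}"

definition circle1 :: "nat \<Rightarrow> 'a::field \<Rightarrow> 'a \<Rightarrow> 'a option set" where
  "circle1 q s c = {Some z | z. (z - s) * (conjq q z - conjq q s) = c}"

definition circle2 :: "nat \<Rightarrow> 'a::field \<Rightarrow> 'a \<Rightarrow> 'a option set" where
  "circle2 q s c = {Some z | z. conjq q s * z + s * conjq q z = c} \<union> {None}"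

definition circles :: "nat \<Rightarrow> 'a::field option set set" where
  "circles q = {circle1 q s c | s c. c \<in> GFq q \<and> c \<noteq> 0}
             \<union> {circle2 q s c | s c. s \<noteq> 0 \<and> c \<in> GFq q}"

definition tangential :: "'a set \<Rightarrow> 'a set \<Rightarrow> bool" where
  "tangential C D \<longleftrightarrow> card (C \<inter> D) = 1"

end

theory Submission
  imports Defs "HOL-Number_Theory.Residues" "HOL-Computational_Algebra.Polynomial"
begin

text \<open>A circle of the first type with centre \<open>t\<close> and radius \<open>d\<close> meets \<open>\<B>\<^sub>a\<close> in the points
  of \<open>\<B>\<^sub>a\<close> on the line \<open>t\<^sup>q z + t z\<^sup>q = a + N t - d\<close> (with \<open>N t = t\<^sup>q\<^sup>+\<^sup>1\<close>), and in odd
  characteristic such a line meets \<open>\<B>\<^sub>a\<close> in exactly one point iff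
  \<open>(a + N t - d)\<^sup>2 = 4 a N t\<close>. Imposing this for \<open>a = 1\<close> and \<open>a = \<mu>\<^sup>2\<close> leaves exactly
  \<open>N t = ((1 \<plusminus> \<mu>)/2)\<^sup>2\<close> and \<open>d = ((1 \<mp> \<mu>)/2)\<^sup>2\<close>, i.e. \<open>t = (1 \<plusminus> \<mu>)/2 \<cdot> P\<close> with \<open>N P = 1\<close>;
  circles of the second type cannot be tangent to both since \<open>\<mu>\<^sup>2 \<noteq> 1\<close>. The points of
  tangency \<open>P\<close> and \<open>\<plusminus>\<mu>P\<close> tell the \<open>2(q + 1)\<close> circles apart, \<open>q + 1\<close> being the order of the
  norm-one group.\<close>

lemma power_card_UNIV_eq_self:
  fixes x :: "'a::{field,finite}"
  shows "x ^ card (UNIV :: 'a set) = x"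
proof (cases "x = 0")
  case True
  then show ?thesis by (simp add: finite_UNIV_card_ge_0)
next
  case False
  let ?F = "UNIV - {0 :: 'a}"
  have "bij_betw ((*) x) ?F ?F"
    using False by (auto intro!: bij_betwI[where g = "\<lambda>y. y / x"])
  then have "(\<Prod>y\<in>?F. x * y) = \<Prod>?F"
    by (rule prod.reindex_bij_betw)
  moreover have "(\<Prod>y\<in>?F. x * y) = x ^ card ?F * \<Prod>?F"
    by (simp add: prod.distrib)
  moreover have "\<Prod>?F \<noteq> 0"
    by simp
  ultimately have "x ^ (card (UNIV :: 'a set) - 1) = 1"
    by (simp add: card_Diff_singleton)
  moreover obtain n where "card (UNIV :: 'a set) = Suc n"
    using finite_UNIV_card_ge_0[OF finite] gr0_implies_Suc by blast
  ultimately show ?thesis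
    by simp
qed

lemma card_roots_power_eq_poly_le:
  fixes p :: "'a::field poly"
  assumes "degree p < n"
  shows "card {x. x ^ n = poly p x} \<le> n"
proof -
  let ?r = "monom 1 n - p"
  have deg: "degree ?r = n"
    using assms degree_add_eq_left[of "- p" "monom 1 n"] by (simp add: degree_monom_eq)
  have "?r \<noteq> 0"
  proof
    assume "?r = 0"
    with deg assms show False by simp
  qed
  then have "card {x. poly ?r x = 0} \<le> n"
    using card_poly_roots_bound[of ?r] deg by simp
  moreover have "{x. poly ?r x = 0} = {x. x ^ n = poly p x}"
    by (simp add: poly_monom)
  ultimately show ?thesis
    by simp
qed

lemma card_norm_fiber_le:
  fixes v :: "'a::{field,finite}"
  shows "card {x::'a. x * x ^ q = v} \<le> card {x::'a. x * x ^ q = 1}"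
proof (cases "\<exists>x0. x0 \<noteq> 0 \<and> x0 * x0 ^ q = v")
  case True
  then obtain x0 where x0: "x0 \<noteq> 0" "x0 * x0 ^ q = v"
    by blast
  have "{x. x * x ^ q = v} \<subseteq> (*) x0 ` {x. x * x ^ q = 1}"
  proof
    fix x
    assume "x \<in> {x. x * x ^ q = v}"
    then have "x / x0 * (x / x0) ^ q = v / v"
      using x0 by (simp add: power_divide)
    also have "v / v = 1"
      using x0 by (auto simp flip: x0(2))
    finally show "x \<in> (*) x0 ` {x. x * x ^ q = 1}"
      using x0(1) by (intro image_eqI[of _ _ "x / x0"]) simp_all
  qed
  then have "card {x. x * x ^ q = v} \<le> card ((*) x0 ` {x. x * x ^ q = 1})"
    by (rule card_mono[OF finite])
  also have "\<dots> \<le> card {x::'a. x * x ^ q = 1}"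
    by (simp add: card_image_le)
  finally show ?thesis .
next
  case False
  then have "{x. x * x ^ q = v} \<subseteq> {0}"
    by auto
  then have "card {x. x * x ^ q = v} \<le> card {0::'a}"
    by (rule card_mono[OF finite])
  also have "\<dots> = card {1::'a}"
    by simp
  also have "\<dots> \<le> card {x::'a. x * x ^ q = 1}"
    by (rule card_mono[OF finite]) simp
  finally show ?thesis .
qed

text \<open>The norm \<open>x \<mapsto> x\<^sup>q\<^sup>+\<^sup>1\<close> maps the \<open>q\<^sup>2 - 1\<close> units into at most \<open>q - 1\<close> values, with fibres no
  larger than the norm-one group; the latter consists of roots of \<open>x\<^sup>q\<^sup>+\<^sup>1 = 1\<close>.\<close>

lemma card_norm_eq_one:
  fixes q :: nat
  assumes card: "card (UNIV :: 'a::{field,finite} set) = q ^ 2" and "q > 1"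
  shows "card {x :: 'a. x * x ^ q = 1} = q + 1"
proof -
  let ?U = "{x :: 'a. x * x ^ q = 1}"
  let ?K = "{v :: 'a. v ^ q = v} - {0}"
  have card_U_le: "card ?U \<le> q + 1"
    using card_roots_power_eq_poly_le[of "[:1:]" "q + 1"] by simp
  have "card {v :: 'a. v ^ q = v} \<le> q"
    using card_roots_power_eq_poly_le[of "[:0, 1:]" q] \<open>q > 1\<close> by simp
  then have card_K: "card ?K \<le> q - 1"
    using \<open>q > 1\<close> by (simp add: card_Diff_singleton)
  have norm_in_K: "x * x ^ q \<in> ?K" if "x \<noteq> 0" for x :: 'a
  proof -
    have "(x * x ^ q) ^ q = x ^ q * x ^ (q * q)"
      by (simp add: power_mult_distrib power_mult)
    also have "x ^ (q * q) = x"
      using power_card_UNIV_eq_self[of x] card by (simp add: power2_eq_square)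
    finally show ?thesis
      using that by (simp add: mult.commute)
  qed
  let ?F = "\<lambda>v. {x :: 'a. x * x ^ q = v}"
  have "UNIV - {0} \<subseteq> (\<Union>v\<in>?K. ?F v)"
    using norm_in_K by blast
  have "(q - 1) * (q + 1) = card (UNIV - {0 :: 'a})"
    using card \<open>q > 1\<close> by (simp add: card_Diff_singleton power2_eq_square diff_mult_distrib)
  also have "\<dots> \<le> card (\<Union>v\<in>?K. ?F v)"
    by (rule card_mono[OF finite]) fact
  also have "\<dots> \<le> (\<Sum>v\<in>?K. card (?F v))"
    by (rule card_UN_le) simp
  also have "\<dots> \<le> (\<Sum>v\<in>?K. card ?U)"
    by (rule sum_mono) (rule card_norm_fiber_le)
  also have "\<dots> \<le> (q - 1) * card ?U"
    using card_K by simp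
  finally have "(q - 1) * (q + 1) \<le> (q - 1) * card ?U" .
  then have "q + 1 \<le> card ?U"
    by (rule mult_left_le_imp_le) (use \<open>q > 1\<close> in simp)
  with card_U_le show ?thesis
    by simp
qed

lemma CHAR_eq_prime_if_card_power:
  assumes "prime p" and "card (UNIV :: 'a::{field,finite} set) = p ^ k"
  shows "CHAR('a) = p"
proof -
  have "prime CHAR('a)"
    using prime_CHAR_semidom finite_imp_CHAR_pos[OF finite] by blast
  moreover have "CHAR('a) dvd p ^ k"
    using CHAR_dvd_CARD[where ?'a = 'a] assms(2) by simp
  ultimately show ?thesis
    using assms(1) prime_dvd_power primes_dvd_imp_eq by blast
qed

lemma plus_minus_neq_one:
  fixes \<mu> \<nu> :: "'a::idom"
  assumes "\<mu>^2 \<noteq> 1" and "\<nu> \<in> {\<mu>, -\<mu>}"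
  shows "\<nu> \<noteq> 1" and "\<nu> \<noteq> -1" and "\<nu>^2 = \<mu>^2"
  using assms by (auto simp: minus_equation_iff)

lemma tangency_equations_solve:
  fixes n d \<mu> :: "'a::field"
  assumes two: "(2::'a) \<noteq> 0" and "\<mu>^2 \<noteq> 1"
    and eq1: "(1 + n - d)^2 = 4 * n" and eq\<mu>: "(\<mu>^2 + n - d)^2 = 4 * \<mu>^2 * n"
  shows "\<exists>\<nu>\<in>{\<mu>, -\<mu>}. n = ((1 + \<nu>) / 2)^2 \<and> d = ((1 - \<nu>) / 2)^2"
proof -
  define e where "e = 1 + n - d"
  have e2: "e^2 = 4 * n"
    using eq1 unfolding e_def .
  have "(e + \<mu>^2 - 1)^2 = \<mu>^2 * e^2"
    unfolding e2 using eq\<mu> unfolding e_def by (simp add: algebra_simps)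
  moreover have "(e + \<mu>^2 - 1)^2 - \<mu>^2 * e^2 = (1 - \<mu>) * (1 + \<mu>) * ((e - (1 + \<mu>)) * (e - (1 - \<mu>)))"
    by (simp add: power2_eq_square algebra_simps)
  moreover have "(1 - \<mu>) * (1 + \<mu>) \<noteq> 0"
    using \<open>\<mu>^2 \<noteq> 1\<close> by (simp add: power2_eq_square algebra_simps)
  ultimately have "(e - (1 + \<mu>)) * (e - (1 - \<mu>)) = 0"
    by simp
  then obtain \<nu> where \<nu>: "\<nu> \<in> {\<mu>, -\<mu>}" and e: "e = 1 + \<nu>"
    by (metis diff_conv_add_uminus eq_iff_diff_eq_0 insertCI mult_eq_0_iff)
  have four: "(4::'a) \<noteq> 0"
    using mult_eq_0_iff[of "2::'a" 2] two by simp
  then have "n = ((1 + \<nu>) / 2)^2"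
    using e2 two unfolding e by (simp add: field_simps)
  moreover have "d = ((1 - \<nu>) / 2)^2"
    using e four unfolding e_def calculation by (simp add: field_simps power2_eq_square)
  ultimately show ?thesis
    using \<nu> by blast
qed

locale quadratic_conjugation =
  fixes q :: nat and cnj :: "'a::field \<Rightarrow> 'a"
  assumes conjq_eq_cnj: "conjq q = cnj"
    and cnj_add [simp]: "cnj (x + y) = cnj x + cnj y"
    and cnj_cnj [simp]: "cnj (cnj x) = x"
    and two_neq_zero: "(2::'a) \<noteq> 0"
begin

lemma cnj_eq_power: "cnj x = x ^ q"
  using conjq_eq_cnj unfolding conjq_def by metis

lemma cnj_mult [simp]: "cnj (x * y) = cnj x * cnj y"
  by (simp add: cnj_eq_power power_mult_distrib)

lemma cnj_divide [simp]: "cnj (x / y) = cnj x / cnj y"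
  by (simp add: cnj_eq_power power_divide)

lemma cnj_0 [simp]: "cnj 0 = 0"
  using cnj_add[of 0 0] by (metis add_0 add_cancel_right_right)

lemma cnj_1 [simp]: "cnj 1 = 1"
  by (simp add: cnj_eq_power)

lemma cnj_uminus [simp]: "cnj (- x) = - cnj x"
  using minus_unique[of "cnj x" "cnj (- x)"] cnj_add[of x "- x"] by simp

lemma cnj_diff [simp]: "cnj (x - y) = cnj x - cnj y"
  using cnj_add[of x "- y"] by simp

lemma cnj_of_nat [simp]: "cnj (of_nat n) = of_nat n"
  by (induction n) simp_all

lemma cnj_numeral [simp]: "cnj (numeral n) = numeral n"
  using cnj_of_nat[of "numeral n"] by simp

lemma cnj_power [simp]: "cnj (x ^ n) = cnj x ^ n"
  by (induction n) simp_all

lemma cnj_eq_0_iff [simp]: "cnj x = 0 \<longleftrightarrow> x = 0"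
  by (metis cnj_0 cnj_cnj)

lemma four_neq_zero: "(4::'a) \<noteq> 0"
  using two_neq_zero mult_eq_0_iff[of "2::'a" 2] by simp

lemma GFq_iff_cnj: "z \<in> GFq q \<longleftrightarrow> cnj z = z"
  by (simp add: GFq_def cnj_eq_power)

lemma Some_in_circle1_iff: "Some z \<in> circle1 q t d \<longleftrightarrow> (z - t) * (cnj z - cnj t) = d"
  unfolding circle1_def conjq_eq_cnj by auto

definition circle_line_meet :: "'a \<Rightarrow> 'a \<Rightarrow> 'a \<Rightarrow> 'a set" where
  "circle_line_meet a t e = {z. z * cnj z = a \<and> cnj t * z + t * cnj z = e}"

lemma circle1_Int_circle1_origin:
  "circle1 q t d \<inter> circle1 q 0 a = Some ` circle_line_meet a t (a + t * cnj t - d)"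
proof -
  have "(z - t) * (cnj z - cnj t) = d \<longleftrightarrow> cnj t * z + t * cnj z = a + t * cnj t - d"
    if "z * cnj z = a" for z
    using that by (auto simp: algebra_simps)
  then show ?thesis
    unfolding circle1_def circle_line_meet_def conjq_eq_cnj by auto
qed

lemma circle2_Int_circle1_origin:
  "circle2 q t d \<inter> circle1 q 0 a = Some ` circle_line_meet a t d"
  unfolding circle1_def circle2_def circle_line_meet_def conjq_eq_cnj by auto

text \<open>The reflection \<open>z \<mapsto> t \<cdot> cnj z / cnj t\<close> maps \<open>circle_line_meet a t e\<close> to itself,
  so a unique meeting point is fixed by it, which makes the two summands of the line equation equal.\<close>

lemma discriminant_if_card_circle_line_meet_eq_1:
  assumes "card (circle_line_meet a t e) = 1"
  shows "e^2 = 4 * a * (t * cnj t)"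
proof -
  obtain z where single: "circle_line_meet a t e = {z}"
    using assms card_1_singletonE by blast
  then have norm: "z * cnj z = a" and line: "cnj t * z + t * cnj z = e"
    unfolding circle_line_meet_def by auto
  show ?thesis
  proof (cases "t = 0")
    case True
    then show ?thesis
      using line by simp
  next
    case False
    define z' where "z' = t * cnj z / cnj t"
    have "z' \<in> circle_line_meet a t e"
      using False norm line unfolding circle_line_meet_def z'_def by (simp add: field_simps)
    then have "z' = z"
      using single by blast
    then have fixed: "t * cnj z = cnj t * z"
      using False unfolding z'_def by (simp add: field_simps)
    have "e = cnj t * z + t * cnj z"
      using line by simp
    also have "\<dots> = 2 * (cnj t * z)"
      unfolding fixed by (rule mult_2[symmetric])
    finally have "e = 2 * (cnj t * z)" .
    then have "e^2 = 4 * ((cnj t * z) * (cnj t * z))"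
      by (simp add: power2_eq_square)
    also have "\<dots> = 4 * ((cnj t * z) * (t * cnj z))"
      by (simp only: fixed)
    also have "\<dots> = 4 * (z * cnj z) * (t * cnj t)"
      by (simp add: algebra_simps)
    finally show ?thesis
      using norm by simp
  qed
qed

lemma circle_line_meet_subset:
  assumes "t \<noteq> 0" and discr: "e^2 = 4 * a * (t * cnj t)"
  shows "circle_line_meet a t e \<subseteq> {e / (2 * cnj t)}"
proof
  fix z
  assume "z \<in> circle_line_meet a t e"
  then have norm: "z * cnj z = a" and line: "cnj t * z + t * cnj z = e"
    unfolding circle_line_meet_def by auto
  have "(2 * (cnj t * z) - e)^2 = e^2 - 4 * a * (t * cnj t)"
    using norm line[symmetric] by (simp add: power2_eq_square algebra_simps)
  then have "2 * (cnj t * z) = e"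
    using discr by simp
  then show "z \<in> {e / (2 * cnj t)}"
    using \<open>t \<noteq> 0\<close> two_neq_zero by (simp add: field_simps)
qed

lemma circle1_tangent_circle1_origin:
  assumes "t \<noteq> 0" and "(a + t * cnj t - d)^2 = 4 * a * (t * cnj t)"
    and "Some z \<in> circle1 q t d" and "Some z \<in> circle1 q 0 a"
  shows "circle1 q t d \<inter> circle1 q 0 a = {Some z}"
proof -
  have "Some z \<in> Some ` circle_line_meet a t (a + t * cnj t - d)"
    using assms(3,4) unfolding circle1_Int_circle1_origin[symmetric] by blast
  then have "z \<in> circle_line_meet a t (a + t * cnj t - d)"
    by blast
  then have "circle_line_meet a t (a + t * cnj t - d) = {z}"
    using circle_line_meet_subset[OF assms(1,2)] by blast
  then show ?thesis
    unfolding circle1_Int_circle1_origin by simp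
qed

definition tangent_circle :: "'a \<Rightarrow> 'a \<Rightarrow> 'a option set" where
  "tangent_circle \<nu> P = circle1 q ((1 + \<nu>) / 2 * P) (((1 - \<nu>) / 2)^2)"

lemma Some_in_tangent_circle:
  assumes "cnj \<nu> = \<nu>" and P: "P * cnj P = 1"
  shows "Some P \<in> tangent_circle \<nu> P" and "Some (\<nu> * P) \<in> tangent_circle \<nu> P"
proof -
  define s where "s = (1 + \<nu>) / 2"
  have "(1 - s)^2 = ((1 - \<nu>) / 2)^2" and "(\<nu> - s)^2 = ((1 - \<nu>) / 2)^2"
    using two_neq_zero unfolding s_def by (simp_all add: field_simps power2_eq_square)
  moreover have "(P - s * P) * (cnj P - s * cnj P) = (1 - s)^2 * (P * cnj P)"
    and "(\<nu> * P - s * P) * (\<nu> * cnj P - s * cnj P) = (\<nu> - s)^2 * (P * cnj P)"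
    by (simp_all add: power2_eq_square algebra_simps)
  moreover have "cnj s = s"
    using assms(1) unfolding s_def by simp
  ultimately show "Some P \<in> tangent_circle \<nu> P" and "Some (\<nu> * P) \<in> tangent_circle \<nu> P"
    unfolding tangent_circle_def s_def[symmetric] Some_in_circle1_iff using P assms(1) by simp_all
qed

lemma tangent_circle_Int_circle1_origin:
  assumes "cnj \<nu> = \<nu>" and "\<nu> \<noteq> -1" and P: "P * cnj P = 1"
  shows "tangent_circle \<nu> P \<inter> circle1 q 0 1 = {Some P}"
    and "tangent_circle \<nu> P \<inter> circle1 q 0 (\<nu>^2) = {Some (\<nu> * P)}"
proof -
  define s where "s = (1 + \<nu>) / 2"
  have s: "cnj s = s" "s \<noteq> 0" "\<nu> = 2 * s - 1"
    using assms(1,2) two_neq_zero unfolding s_def by (auto simp: field_simps add_eq_0_iff)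
  have radius: "((1 - \<nu>) / 2)^2 = (1 - s)^2"
    using two_neq_zero unfolding s_def by (simp add: field_simps)
  have on_circle:
    "Some P \<in> circle1 q (s * P) ((1 - s)^2)" "Some (\<nu> * P) \<in> circle1 q (s * P) ((1 - s)^2)"
    using Some_in_tangent_circle[OF assms(1) P] radius
    unfolding tangent_circle_def s_def[symmetric] by simp_all
  have on_origin_circles: "Some P \<in> circle1 q 0 1" "Some (\<nu> * P) \<in> circle1 q 0 (\<nu>^2)"
    unfolding Some_in_circle1_iff using P assms(1) by (simp_all add: power2_eq_square algebra_simps)
  have norm_sP: "(s * P) * cnj (s * P) = s^2"
    using P s(1) by (simp add: power2_eq_square algebra_simps)
  have "(1 + s^2 - (1 - s)^2)^2 = 4 * 1 * s^2"
    by (simp add: power2_eq_square algebra_simps)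
  moreover have "(\<nu>^2 + s^2 - (1 - s)^2)^2 = 4 * \<nu>^2 * s^2"
    unfolding s(3) by (simp add: power2_eq_square algebra_simps)
  moreover have "s * P \<noteq> 0"
    using P s(2) by auto
  ultimately show "tangent_circle \<nu> P \<inter> circle1 q 0 1 = {Some P}"
    and "tangent_circle \<nu> P \<inter> circle1 q 0 (\<nu>^2) = {Some (\<nu> * P)}"
    unfolding tangent_circle_def s_def[symmetric] radius
    using circle1_tangent_circle1_origin on_circle on_origin_circles norm_sP by simp_all
qed

lemma tangent_circle_in_circles:
  assumes "cnj \<nu> = \<nu>" and "\<nu> \<noteq> 1"
  shows "tangent_circle \<nu> P \<in> circles q"
proof -
  have "((1 - \<nu>) / 2)^2 \<in> GFq q" and "((1 - \<nu>) / 2)^2 \<noteq> 0"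
    using assms two_neq_zero by (simp_all add: GFq_iff_cnj)
  then show ?thesis
    unfolding circles_def tangent_circle_def by blast
qed

lemma circle2_tangent_origin_circles_imp_degenerate:
  fixes b t d :: 'a
  assumes "b \<noteq> 1"
    and "tangential (circle2 q t d) (circle1 q 0 1)" and "tangential (circle2 q t d) (circle1 q 0 b)"
  shows "t = 0"
proof -
  have "d^2 = 4 * 1 * (t * cnj t)" and "d^2 = 4 * b * (t * cnj t)"
    using assms(2,3) discriminant_if_card_circle_line_meet_eq_1[of 1 t d]
      discriminant_if_card_circle_line_meet_eq_1[of b t d]
    unfolding tangential_def circle2_Int_circle1_origin by (simp_all add: card_image)
  then have "4 * (b - 1) * (t * cnj t) = 0"
    by (simp add: algebra_simps)
  then show ?thesis
    using assms(1) four_neq_zero by simp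
qed

lemma circle1_tangent_origin_circles_imp_tangent_circle:
  assumes "cnj \<mu> = \<mu>" and "\<mu>^2 \<noteq> 1"
    and "tangential (circle1 q t d) (circle1 q 0 1)"
    and "tangential (circle1 q t d) (circle1 q 0 (\<mu>^2))"
  shows "\<exists>\<nu>\<in>{\<mu>, -\<mu>}. \<exists>P. P * cnj P = 1 \<and> circle1 q t d = tangent_circle \<nu> P"
proof -
  have "card (circle_line_meet a t (a + t * cnj t - d)) = 1" if "a \<in> {1, \<mu>^2}" for a
    using assms(3,4) that unfolding tangential_def circle1_Int_circle1_origin
    by (auto simp: card_image)
  then have "(1 + t * cnj t - d)^2 = 4 * (t * cnj t)"
    and "(\<mu>^2 + t * cnj t - d)^2 = 4 * \<mu>^2 * (t * cnj t)"
    using discriminant_if_card_circle_line_meet_eq_1 by fastforce+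
  from tangency_equations_solve[OF two_neq_zero assms(2) this]
  obtain \<nu> where \<nu>: "\<nu> \<in> {\<mu>, -\<mu>}"
    and norm_t: "t * cnj t = ((1 + \<nu>) / 2)^2" and d: "d = ((1 - \<nu>) / 2)^2"
    by blast
  define s where "s = (1 + \<nu>) / 2"
  have s: "cnj s = s" "s \<noteq> 0"
    using \<nu> assms(1) plus_minus_neq_one[OF assms(2) \<nu>] two_neq_zero unfolding s_def
    by (auto simp: add_eq_0_iff)
  define P where "P = t / s"
  have "P * cnj P = (t * cnj t) / s^2"
    unfolding P_def using s(1) by (simp add: power2_eq_square)
  then have "P * cnj P = 1"
    using s(2) norm_t unfolding s_def by simp
  moreover have "circle1 q t d = tangent_circle \<nu> P"
    unfolding tangent_circle_def P_def s_def[symmetric] d using s(2) by simp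
  ultimately show ?thesis
    using \<nu> by blast
qed

lemma tangent_circles_origin_circles_eq:
  assumes "cnj \<mu> = \<mu>" and "\<mu>^2 \<noteq> 1"
  shows "{C \<in> circles q. tangential C (circle1 q 0 1) \<and> tangential C (circle1 q 0 (\<mu>^2))}
    = tangent_circle \<mu> ` {P. P * cnj P = 1} \<union> tangent_circle (-\<mu>) ` {P. P * cnj P = 1}"
    (is "?T = ?R")
proof
  show "?T \<subseteq> ?R"
  proof
    fix C
    assume "C \<in> ?T"
    then have C: "C \<in> circles q" "tangential C (circle1 q 0 1)" "tangential C (circle1 q 0 (\<mu>^2))"
      by simp_all
    from C(1) consider (first) t d where "C = circle1 q t d"
      | (second) t d where "C = circle2 q t d" and "t \<noteq> 0"
      unfolding circles_def by blast
    then show "C \<in> ?R"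
    proof cases
      case first
      then show ?thesis
        using circle1_tangent_origin_circles_imp_tangent_circle[OF assms] C by blast
    next
      case second
      then show ?thesis
        using circle2_tangent_origin_circles_imp_degenerate[of "\<mu>^2"] assms(2) C by blast
    qed
  qed
next
  have "tangent_circle \<nu> P \<in> ?T" if "\<nu> \<in> {\<mu>, -\<mu>}" and "P * cnj P = 1" for \<nu> P
  proof -
    have "cnj \<nu> = \<nu>"
      using that(1) assms(1) by auto
    then show ?thesis
      using that(2) plus_minus_neq_one[OF assms(2) that(1)] tangent_circle_in_circles
        tangent_circle_Int_circle1_origin[of \<nu> P]
      by (auto simp: tangential_def)
  qed
  then show "?R \<subseteq> ?T"
    by blast
qed

lemma card_tangent_circles:
  assumes "cnj \<mu> = \<mu>" and "\<mu> \<noteq> 0" and "\<mu>^2 \<noteq> 1" and "finite {P. P * cnj P = 1}"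
  shows "card (tangent_circle \<mu> ` {P. P * cnj P = 1} \<union> tangent_circle (-\<mu>) ` {P. P * cnj P = 1})
    = 2 * card {P. P * cnj P = 1}"
proof -
  let ?U = "{P. P * cnj P = 1}"
  have touch: "tangent_circle \<nu> P \<inter> circle1 q 0 1 = {Some P}"
    "tangent_circle \<nu> P \<inter> circle1 q 0 (\<mu>^2) = {Some (\<nu> * P)}"
    if "\<nu> \<in> {\<mu>, -\<mu>}" and "P \<in> ?U" for \<nu> P
    using that assms(1) plus_minus_neq_one[OF assms(3) that(1)]
      tangent_circle_Int_circle1_origin[of \<nu> P] by auto
  have inj: "inj_on (tangent_circle \<nu>) ?U" if "\<nu> \<in> {\<mu>, -\<mu>}" for \<nu>
    by (rule inj_onI) (metis touch(1)[OF that] option.inject singleton_inject)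
  have "tangent_circle \<mu> ` ?U \<inter> tangent_circle (-\<mu>) ` ?U = {}"
  proof (rule ccontr)
    assume "tangent_circle \<mu> ` ?U \<inter> tangent_circle (-\<mu>) ` ?U \<noteq> {}"
    then obtain P Q where "P \<in> ?U" "Q \<in> ?U" and same: "tangent_circle \<mu> P = tangent_circle (-\<mu>) Q"
      by blast
    then have "P = Q" and "\<mu> * P = - \<mu> * Q"
      using touch[of \<mu> P] touch[of "-\<mu>" Q] by auto
    then have "(2::'a) = 0 \<or> \<mu> = 0 \<or> P = 0"
      by auto
    then show False
      using \<open>P \<in> ?U\<close> assms(2) two_neq_zero by auto
  qed
  then show ?thesis
    using assms(4) inj by (simp add: card_Un_disjoint card_image)
qed

end

lemma quadratic_conjugation_GF:
  fixes p m q :: nat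
  assumes p: "prime p" "odd p" and q: "q = p ^ m"
    and card: "card (UNIV :: 'a::{field,finite} set) = q ^ 2"
  shows "quadratic_conjugation q (conjq q :: 'a \<Rightarrow> 'a)"
proof unfold_locales
  have "card (UNIV :: 'a set) = p ^ (m * 2)"
    using card q by (simp add: power_mult)
  then have char: "CHAR('a) = p"
    using CHAR_eq_prime_if_card_power p(1) by blast
  fix x y :: 'a
  show "conjq q (x + y) = conjq q x + conjq q y"
    unfolding conjq_def using freshmans_dream'[of q m x y] char p(1) q by simp
  show "conjq q (conjq q x) = x"
    unfolding conjq_def using power_card_UNIV_eq_self[of x] card
    by (simp add: power_mult[symmetric] power2_eq_square)
  show "(2::'a) \<noteq> 0"
  proof
    assume "(2::'a) = 0"
    then have "p dvd 2"
      using of_nat_eq_0_iff_char_dvd[where ?'a = 'a, of 2] char by simp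
    then show False
      using p prime_ge_2_nat[of p] dvd_imp_le[of p 2] by auto
  qed
qed simp

theorem mainTheorem6:
  fixes p m q :: nat and \<mu> :: "'a::{field,finite}"
  assumes "prime p" and "odd p" and "m \<ge> 1" and "q = p ^ m"
    and "card (UNIV :: 'a set) = q ^ 2"
    and "\<mu> \<in> GFq q" and "\<mu> \<noteq> 0" and "\<mu> ^ 2 \<noteq> 1"
  shows "let b = \<mu> ^ 2;
             s = (1 + \<mu>) / 2; c = ((1 - \<mu>) / 2) ^ 2;
             s' = (1 - \<mu>) / 2; c' = ((1 + \<mu>) / 2) ^ 2;
             U = {P. P * conjq q P = 1};
             T = {C \<in> circles q. tangential C (circle1 q 0 1) \<and> tangential C (circle1 q 0 b)}
         in T = {circle1 q (s * P) c | P. P \<in> U} \<union> {circle1 q (s' * P) c' | P. P \<in> U}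
            \<and> card T = 2 * (q + 1)
            \<and> (\<forall>P\<in>U. Some P \<in> circle1 q (s * P) c \<and> Some (\<mu> * P) \<in> circle1 q (s * P) c
                     \<and> Some P \<in> circle1 q (s' * P) c' \<and> Some (- \<mu> * P) \<in> circle1 q (s' * P) c')"
proof -
  interpret quadratic_conjugation q "conjq q :: 'a \<Rightarrow> 'a"
    using quadratic_conjugation_GF assms(1,2,4,5) .
  let ?U = "{P :: 'a. P * conjq q P = 1}"
  have "q > 1"
    using one_less_power[OF prime_gt_1_nat[OF assms(1)], of m] assms(3,4) by simp
  then have card_U: "card ?U = q + 1"
    using card_norm_eq_one[OF assms(5)] by (simp add: conjq_def)
  have \<mu>: "conjq q \<mu> = \<mu>"
    using assms(6) by (simp add: GFq_iff_cnj)
  have families: "circle1 q ((1 + \<mu>) / 2 * P) (((1 - \<mu>) / 2)^2) = tangent_circle \<mu> P"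
    "circle1 q ((1 - \<mu>) / 2 * P) (((1 + \<mu>) / 2)^2) = tangent_circle (-\<mu>) P" for P
    by (simp_all add: tangent_circle_def)
  show ?thesis
    unfolding Let_def families setcompr_eq_image
    using tangent_circles_origin_circles_eq[OF \<mu> assms(8)] card_U
      card_tangent_circles[OF \<mu> assms(7,8) finite]
      Some_in_tangent_circle[OF \<mu>] Some_in_tangent_circle[of "-\<mu>"] \<mu>
    by auto
qed

end
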